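(* Let $t$ be a well-formed tree over $\tilde A_{i,k}$, $\Sigma$ a winning strategy of $P$ in $\mathcal G(t)$, $u\in\Sigma$, and $j$ a $P$-losing number. Suppose that for every strict prefix $w\prec u$ the label $t(w)$ is neither $\sim$ nor $p_{j'}$ with $j'<j$. Then $s(\varepsilon,\Sigma{\upharpoonright}u){\upharpoonright}j=s(u,\Sigma){\upharpoonright}j$.
   Context: Fix natural numbers $i<k$. Trees over a ranked alphabet are partial maps $t:\omega^*\to A$ with non-empty prefix-closed domain where a node with an $m$-ary label has exactly the children $u0,\ldots,u(m-1)$; $t{\upharpoonright}u$ is the subtree at $u$, $\preceq$ the prefix order. The alphabet $\tilde A_{i,k}$ has unary letters $p_i,\ldots,p_k$, a unary letter $\sim$, and binary letters $c_1,c_2$. Players $1,2$; $\bar P$ the opponent. Well-formed: no branch has infinitely many $\sim$. A node $u$ is switched if an odd number of strict prefixes $w\prec u$ have $t(w)=\sim$, kept otherwise. The game $\mathcal G(t)$: positions are nodes, moves to children, start at the root; $u$ is controlled by $P$ iff ($u$ kept and $t(u)=c_P$) or ($u$ switched and $t(u)=c_{\bar P}$). An infinite play is won by player 1 iff it is (eventually) kept and the least $j$ with infinitely many nodes labelled $p_j$ is even, or (eventually) switched and this $j$ is odd (take $j=k$ if none occurs infinitely often). A strategy of $P$ is a set $\Sigma\subseteq\mathrm{dom}(t)$ containing the root, prefix-closed, where each $u\in\Sigma$ controlled by $P$ has exactly one child in $\Sigma$ and every other $u\in\Sigma$ has all children in $\Sigma$; winning if every branch all of whose prefixes lie in $\Sigma$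 is won by $P$. For $u\in\Sigma$, $\Sigma{\upharpoonright}u=\{w:uw\in\Sigma\}$; when no strict prefix of $u$ is labelled $\sim$ it is a winning strategy of $P$ in $\mathcal G(t{\upharpoonright}u)$, and $s(\cdot,\Sigma{\upharpoonright}u)$ is computed with respect to $t{\upharpoonright}u$. $P$-losing numbers: $j\in\{i,\ldots,k\}$ odd for $P=1$, even for $P=2$; $i',k'$ least/largest. Tuples $(\theta_{i'},\theta_{i'+2},\ldots,\theta_{k'})$ of countable ordinals are ordered lexicographically (smaller index more significant), suprema in this order; $(\theta_{i'},\ldots,\theta_{k'}){\upharpoonright}j=(\theta_{i'},\ldots,\theta_j)$ for $P$-losing $j$. A node $u\in\Sigma$ is active if $t(u)=p_j$ for a $P$-losing $j$ and no strict prefix $w\prec u$ has $t(w)=\sim$ or $t(w)=p_{j'}$ with $j'<j$; $\mathrm{act}(\Sigma)$ is the set of active nodes. $u\gg w$ iff $u,w\in\Sigma$, $u\prec w$ and some $w'\in\mathrm{act}(\Sigma)$ has $u\preceq w'\preceq w$ (well-founded for winning $\Sigma$). $\mathrm{succ}_u(\Sigma)$ is the set of $\preceq$-minimal elements of $\{w\in\mathrm{act}(\Sigma):u\preceq w\}$. The map $s(\cdot,\Sigma)$ is defined by well-founded recursion along $\gg$: (a) if $u\in\mathrm{act}(\Sigma)$, $t(u)=p_j$ and $s(u0,\Sigma)=(\theta_{i'},\ldots,\theta_{k'})$, then $s(u,\Sigma)=(\theta_{i'},\ldots,\theta_{j-2},\theta_j+1,0,\ldots,0)$; (b) if $u\notin\mathrm{act}(\Sigma)$,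 then $s(u,\Sigma)=\sup_{w\in\mathrm{succ}_u(\Sigma)}s(w,\Sigma)$ (empty supremum $=(0,\ldots,0)$). *)

theory Defs
  imports Main "HOL-Library.Sublist" "HOL-Library.Countable_Set"
begin

datatype player = Pl1 | Pl2

fun opp :: "player \<Rightarrow> player" where
  "opp Pl1 = Pl2" | "opp Pl2 = Pl1"

text \<open>Letters of the ranked alphabet: Prio j = p_j (unary), Tilde = the letter ~ (unary),
  Choice P = c_P (binary).\<close>
datatype lab = Prio nat | Tilde | Choice player

fun arity :: "lab \<Rightarrow> nat" where
  "arity (Prio _) = 1" | "arity Tilde = 1" | "arity (Choice _) = 2"

type_synonym tree = "nat list \<Rightarrow> lab option"

definition tdom :: "tree \<Rightarrow> nat list set" where
  "tdom t = {u. t u \<noteq> None}"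

definition is_tree :: "nat \<Rightarrow> nat \<Rightarrow> tree \<Rightarrow> bool" where
  "is_tree i k t \<longleftrightarrow>
     tdom t \<noteq> {} \<and>
     (\<forall>u w. u \<in> tdom t \<longrightarrow> prefix w u \<longrightarrow> w \<in> tdom t) \<and>
     (\<forall>u a. t u = Some a \<longrightarrow> (\<forall>d. u @ [d] \<in> tdom t \<longleftrightarrow> d < arity a)) \<and>
     (\<forall>u j. t u = Some (Prio j) \<longrightarrow> i \<le> j \<and> j \<le> k)"

definition subtree :: "tree \<Rightarrow> nat list \<Rightarrow> tree" where
  "subtree t u = (\<lambda>w. t (u @ w))"

definition bnode :: "(nat \<Rightarrow> nat) \<Rightarrow> nat \<Rightarrow> nat list" where
  "bnode \<beta> n = map \<beta> [0..<n]"

definition is_branch :: "tree \<Rightarrow> (nat \<Rightarrow> nat) \<Rightarrow> bool" where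
  "is_branch t \<beta> \<longleftrightarrow> (\<forall>n. bnode \<beta> n \<in> tdom t)"

definition well_formed :: "tree \<Rightarrow> bool" where
  "well_formed t \<longleftrightarrow> (\<forall>\<beta>. is_branch t \<beta> \<longrightarrow> finite {n. t (bnode \<beta> n) = Some Tilde})"

definition switched :: "tree \<Rightarrow> nat list \<Rightarrow> bool" where
  "switched t u \<longleftrightarrow> odd (card {w. strict_prefix w u \<and> t w = Some Tilde})"

definition controlled :: "tree \<Rightarrow> player \<Rightarrow> nat list \<Rightarrow> bool" where
  "controlled t P u \<longleftrightarrow>
     (\<not> switched t u \<and> t u = Some (Choice P)) \<or> (switched t u \<and> t u = Some (Choice (opp P)))"

definition ev_kept :: "tree \<Rightarrow> (nat \<Rightarrow> nat) \<Rightarrow> bool" where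
  "ev_kept t \<beta> \<longleftrightarrow> (\<exists>N. \<forall>n\<ge>N. \<not> switched t (bnode \<beta> n))"

definition ev_switched :: "tree \<Rightarrow> (nat \<Rightarrow> nat) \<Rightarrow> bool" where
  "ev_switched t \<beta> \<longleftrightarrow> (\<exists>N. \<forall>n\<ge>N. switched t (bnode \<beta> n))"

definition inf_prio :: "nat \<Rightarrow> tree \<Rightarrow> (nat \<Rightarrow> nat) \<Rightarrow> nat" where
  "inf_prio k t \<beta> =
     (if \<exists>j. infinite {n. t (bnode \<beta> n) = Some (Prio j)}
      then LEAST j. infinite {n. t (bnode \<beta> n) = Some (Prio j)} else k)"

definition won_by_1 :: "nat \<Rightarrow> tree \<Rightarrow> (nat \<Rightarrow> nat) \<Rightarrow> bool" where
  "won_by_1 k t \<beta> \<longleftrightarrow>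
     (ev_kept t \<beta> \<and> even (inf_prio k t \<beta>)) \<or> (ev_switched t \<beta> \<and> odd (inf_prio k t \<beta>))"

definition won_by :: "nat \<Rightarrow> player \<Rightarrow> tree \<Rightarrow> (nat \<Rightarrow> nat) \<Rightarrow> bool" where
  "won_by k P t \<beta> \<longleftrightarrow> (if P = Pl1 then won_by_1 k t \<beta> else \<not> won_by_1 k t \<beta>)"

definition strategy :: "player \<Rightarrow> tree \<Rightarrow> nat list set \<Rightarrow> bool" where
  "strategy P t S \<longleftrightarrow>
     S \<subseteq> tdom t \<and> [] \<in> S \<and> (\<forall>u w. u \<in> S \<longrightarrow> prefix w u \<longrightarrow> w \<in> S) \<and>
     (\<forall>u\<in>S. if controlled t P u
              then (\<exists>!d. u @ [d] \<in> S)
              else (\<forall>d. u @ [d] \<in> tdom t \<longrightarrow> u @ [d] \<in> S))"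

definition winning_strategy :: "nat \<Rightarrow> player \<Rightarrow> tree \<Rightarrow> nat list set \<Rightarrow> bool" where
  "winning_strategy k P t S \<longleftrightarrow>
     strategy P t S \<and> (\<forall>\<beta>. (\<forall>n. bnode \<beta> n \<in> S) \<longrightarrow> won_by k P t \<beta>)"

definition restr :: "nat list set \<Rightarrow> nat list \<Rightarrow> nat list set" where
  "restr S u = {w. u @ w \<in> S}"

definition losing :: "nat \<Rightarrow> nat \<Rightarrow> player \<Rightarrow> nat \<Rightarrow> bool" where
  "losing i k P j \<longleftrightarrow> i \<le> j \<and> j \<le> k \<and> (if P = Pl1 then odd j else even j)"

definition lmin :: "nat \<Rightarrow> nat \<Rightarrow> player \<Rightarrow> nat" where
  "lmin i k P = (LEAST j. losing i k P j)"

definition lmax :: "nat \<Rightarrow> nat \<Rightarrow> player \<Rightarrow> nat" where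
  "lmax i k P = (GREATEST j. losing i k P j)"

text \<open>Tuples (theta_i', theta_i'+2, ..., theta_k') are lists; the entry of index j sits at position lpos j.\<close>
definition lpos :: "nat \<Rightarrow> nat \<Rightarrow> player \<Rightarrow> nat \<Rightarrow> nat" where
  "lpos i k P j = (j - lmin i k P) div 2"

definition tlen :: "nat \<Rightarrow> nat \<Rightarrow> player \<Rightarrow> nat" where
  "tlen i k P = lpos i k P (lmax i k P) + 1"

definition trunc :: "nat \<Rightarrow> nat \<Rightarrow> player \<Rightarrow> nat \<Rightarrow> 'o list \<Rightarrow> 'o list" where
  "trunc i k P j \<theta> = take (lpos i k P j + 1) \<theta>"

text \<open>Ordinals are modelled by a well-ordered type.\<close>
definition ozero :: "'o::wellorder" where
  "ozero = (LEAST x. True)"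

definition osuc :: "'o::wellorder \<Rightarrow> 'o" where
  "osuc x = (LEAST y. x < y)"

definition tle :: "'o::wellorder list \<Rightarrow> 'o list \<Rightarrow> bool" where
  "tle xs ys \<longleftrightarrow> xs = ys \<or> (xs, ys) \<in> lexord {(a, b). a < b}"

definition tsup :: "nat \<Rightarrow> 'o::wellorder list set \<Rightarrow> 'o list" where
  "tsup m X =
     (if X = {} then replicate m ozero
      else THE x. length x = m \<and> (\<forall>y\<in>X. tle y x) \<and>
                  (\<forall>z. length z = m \<and> (\<forall>y\<in>X. tle y z) \<longrightarrow> tle x z))"

definition active :: "nat \<Rightarrow> nat \<Rightarrow> player \<Rightarrow> tree \<Rightarrow> nat list set \<Rightarrow> nat list \<Rightarrow> bool" where
  "active i k P t S u \<longleftrightarrow> u \<in> S \<and>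
     (\<exists>j. t u = Some (Prio j) \<and> losing i k P j \<and>
          (\<forall>w. strict_prefix w u \<longrightarrow> t w \<noteq> Some Tilde \<and> (\<forall>j'<j. t w \<noteq> Some (Prio j'))))"

definition gg :: "nat \<Rightarrow> nat \<Rightarrow> player \<Rightarrow> tree \<Rightarrow> nat list set \<Rightarrow> nat list \<Rightarrow> nat list \<Rightarrow> bool" where
  "gg i k P t S u w \<longleftrightarrow> u \<in> S \<and> w \<in> S \<and> strict_prefix u w \<and>
     (\<exists>w'. active i k P t S w' \<and> prefix u w' \<and> prefix w' w)"

definition succs :: "nat \<Rightarrow> nat \<Rightarrow> player \<Rightarrow> tree \<Rightarrow> nat list set \<Rightarrow> nat list \<Rightarrow> nat list set" where
  "succs i k P t S u =
     {w. active i k P t S w \<and> prefix u w \<and>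
         \<not> (\<exists>w'. active i k P t S w' \<and> prefix u w' \<and> strict_prefix w' w)}"

definition sval :: "nat \<Rightarrow> nat \<Rightarrow> player \<Rightarrow> tree \<Rightarrow> nat list set \<Rightarrow> nat list \<Rightarrow> 'o::wellorder list" where
  "sval i k P t S =
     wfrec {(w, u). gg i k P t S u w}
       (\<lambda>f u. if active i k P t S u then
                (case t u of
                   Some (Prio j) \<Rightarrow>
                     (let \<theta> = f (u @ [0]); p = lpos i k P j
                      in take p \<theta> @ [osuc (\<theta> ! p)] @ replicate (tlen i k P - p - 1) ozero)
                 | _ \<Rightarrow> undefined)
              else tsup (tlen i k P) (f ` succs i k P t S u))"

end

theory Submission
  imports Defs "HOL-Library.List_Lexorder"
begin

text \<open>
  The map s is computed by well-founded recursion along \<open>\<gg>\<close>, and \<open>\<gg>\<close> is well-founded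
  below u because an infinite descending chain would contain an infinite increasing chain of
  active nodes; the branch through it stays kept and sees a P-losing priority infinitely often
  as its least one, contradicting that \<open>\<Sigma>\<close> is winning.

  The two recursions are then compared by induction along \<open>\<gg>\<close> in the subtree at u. The
  active nodes of the subtree are the active nodes of t below u, except that labels p_j' with
  j' > j may additionally become active in the subtree; such a node only changes entries of
  index j' > j, which the truncation to index j ignores. The successor sets match up, and
  truncation commutes with lexicographic least upper bounds of tuples of a fixed length.
\<close>

section \<open>Least upper bounds of tuples\<close>

lemma tle_iff_le: "tle xs ys \<longleftrightarrow> xs \<le> (ys :: 'o::wellorder list)"
  by (auto simp: tle_def list_le_def list_less_def)

lemma ozero_le: "ozero \<le> (x :: 'o::wellorder)"
  unfolding ozero_def by (rule Least_le) simp

lemma replicate_ozero_le: "length z = m \<Longrightarrow> replicate m ozero \<le> (z :: 'o::wellorder list)"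
proof (induction z arbitrary: m)
  case (Cons a z)
  then show ?case using ozero_le[of a] by (auto simp: order_le_less)
qed simp

lemma append_le_append_left: "xs \<le> ys \<Longrightarrow> zs @ xs \<le> zs @ (ys :: 'a::order list)"
  by (auto simp: list_le_def list_less_def intro: lexord_append_leftI)

lemma append_less_append_same_length:
  "xs < ys \<Longrightarrow> length xs = length ys \<Longrightarrow> xs @ as < ys @ (bs :: 'a::order list)"
  unfolding list_less_def by (rule lexord_sufI) simp_all

lemma take_mono_same_length:
  assumes "length xs = length ys" "xs \<le> ys"
  shows "take n xs \<le> take n (ys :: 'a::order list)"
proof (cases "xs = ys")
  case False
  then obtain i where i: "i < length xs" "take i xs = take i ys" "xs ! i < ys ! i"
    using assms unfolding list_le_def list_less_def lexord_take_index_conv by auto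
  show ?thesis
  proof (cases "i < n")
    case True
    have "(take n xs, take n ys) \<in> lexord {(a, b). a < b}"
      unfolding lexord_take_index_conv using i True assms(1)
      by (intro disjI2 exI[of _ i]) (auto simp: min_def)
    then show ?thesis by (simp add: list_le_def list_less_def)
  next
    case False
    then have "take n xs = take n ys" using i(2)
      by (metis min.absorb1 not_less take_take)
    then show ?thesis by simp
  qed
qed simp

definition is_lub_len :: "nat \<Rightarrow> 'a::ord list set \<Rightarrow> 'a list \<Rightarrow> bool" where
  "is_lub_len m X z \<longleftrightarrow> length z = m \<and> (\<forall>y\<in>X. y \<le> z) \<and>
     (\<forall>z'. length z' = m \<and> (\<forall>y\<in>X. y \<le> z') \<longrightarrow> z \<le> z')"

lemma is_lub_len_unique:
  "is_lub_len m X z \<Longrightarrow> is_lub_len m X z' \<Longrightarrow> z = (z' :: 'a::order list)"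
  unfolding is_lub_len_def by (metis order.antisym)

lemma is_lub_len_singleton: "length x = m \<Longrightarrow> is_lub_len m {x} (x :: 'a::order list)"
  unfolding is_lub_len_def by simp

lemma is_lub_len_UN:
  assumes "\<And>a. a \<in> A \<Longrightarrow> is_lub_len m (Y a) (z a)" and "is_lub_len m (z ` A) Z"
  shows "is_lub_len m (\<Union>a\<in>A. Y a) (Z :: 'a::order list)"
proof -
  have "y \<le> z'" if "length z' = m" "\<forall>a\<in>A. z a \<le> z'" "a \<in> A" "y \<in> Y a" for y z' a
    using assms(1)[of a] that order.trans unfolding is_lub_len_def by metis
  then show ?thesis using assms unfolding is_lub_len_def by (auto intro: order.trans)
qed

lemma upper_bound_same_length_exists:
  assumes nomax: "\<forall>x::'o::wellorder. \<exists>y. x < y"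
    and bdd: "\<forall>X::'o set. countable X \<longrightarrow> (\<exists>b. \<forall>x\<in>X. x \<le> b)"
    and X: "countable X" "\<forall>y\<in>X. length y = m"
  shows "\<exists>z. length z = m \<and> (\<forall>y\<in>X. y \<le> (z :: 'o list))"
proof (cases m)
  case 0
  then show ?thesis using X(2) by (intro exI[of _ "[]"]) simp
next
  case (Suc m')
  have "countable (hd ` X)" using X(1) by simp
  then obtain b where b: "\<forall>x\<in>hd ` X. x \<le> b" using bdd by blast
  obtain c where c: "b < c" using nomax by blast
  have "y \<le> c # replicate m' ozero" if y: "y \<in> X" for y
  proof -
    obtain h r where y_eq: "y = h # r" using X(2) y Suc by (cases y) auto
    then have "h \<le> b" using b y by force
    then have "h < c" using c by (rule le_less_trans)
    then show ?thesis using y_eq by simp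
  qed
  then show ?thesis using Suc by (intro exI[of _ "c # replicate m' ozero"]) simp
qed

text \<open>Lists of a fixed length are well-ordered lexicographically, so the least upper bound exists
  as soon as some upper bound does.\<close>
lemma is_lub_len_exists:
  assumes nomax: "\<forall>x::'o::wellorder. \<exists>y. x < y"
    and bdd: "\<forall>X::'o set. countable X \<longrightarrow> (\<exists>b. \<forall>x\<in>X. x \<le> b)"
    and X: "countable X" "\<forall>y\<in>X. length y = m"
  shows "\<exists>z. is_lub_len m X (z :: 'o list)"
proof -
  define U where "U = {z. length z = m \<and> (\<forall>y\<in>X. y \<le> (z :: 'o list))}"
  obtain z0 where "z0 \<in> U" using upper_bound_same_length_exists[OF nomax bdd X] U_def by blast
  then obtain z where z: "z \<in> U" and zmin: "\<And>z'. (z', z) \<in> lex {(a, b). a < b} \<Longrightarrow> z' \<notin> U"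
    using wfE_min[OF wf_lex[OF wf]] by blast
  have "z \<le> z'" if "z' \<in> U" for z'
  proof (rule ccontr)
    assume "\<not> z \<le> z'"
    then have "z' < z" by simp
    then have "(z', z) \<in> lex {(a, b). a < b}"
      using that z unfolding U_def by (simp add: lexord_lex list_less_def)
    then show False using zmin that by blast
  qed
  then show ?thesis using z unfolding is_lub_len_def U_def by blast
qed

lemma tsup_eqI:
  assumes "\<forall>y\<in>X. length y = m" "is_lub_len m X z"
  shows "tsup m X = (z :: 'o::wellorder list)"
proof (cases "X = {}")
  case True
  then have "z = replicate m ozero"
    using assms(2) replicate_ozero_le[of z m] unfolding is_lub_len_def
    by (simp add: order.antisym)
  then show ?thesis using True by (simp add: tsup_def)
next
  case False
  have "(THE x. is_lub_len m X x) = z"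
    using assms(2) is_lub_len_unique[OF _ assms(2)] by (rule the_equality)
  then show ?thesis using False by (simp add: tsup_def tle_iff_le is_lub_len_def)
qed

lemma is_lub_len_tsup:
  assumes nomax: "\<forall>x::'o::wellorder. \<exists>y. x < y"
    and bdd: "\<forall>X::'o set. countable X \<longrightarrow> (\<exists>b. \<forall>x\<in>X. x \<le> b)"
    and X: "countable X" "\<forall>y\<in>X. length y = m"
  shows "is_lub_len m X (tsup m X :: 'o list)"
  using is_lub_len_exists[OF nomax bdd X] tsup_eqI[OF X(2)] by metis

text \<open>If some z' below the truncated bound bounded all truncations, z' extended by an upper
  bound of the matching tails would bound X and be smaller than z.\<close>
lemma is_lub_len_take:
  assumes nomax: "\<forall>x::'o::wellorder. \<exists>y. x < y"
    and bdd: "\<forall>X::'o set. countable X \<longrightarrow> (\<exists>b. \<forall>x\<in>X. x \<le> b)"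
    and X: "countable X" "\<forall>y\<in>X. length y = m" and nm: "n \<le> m"
    and z: "is_lub_len m X (z :: 'o list)"
  shows "is_lub_len n (take n ` X) (take n z)"
proof -
  have lz: "length z = m" and zub: "\<forall>y\<in>X. y \<le> z"
    and zleast: "\<And>z'. length z' = m \<Longrightarrow> \<forall>y\<in>X. y \<le> z' \<Longrightarrow> z \<le> z'"
    using z unfolding is_lub_len_def by blast+
  have least: "take n z \<le> z'" if z': "length z' = n" "\<forall>y\<in>take n ` X. y \<le> z'" for z'
  proof (rule ccontr)
    assume "\<not> take n z \<le> z'"
    then have lt: "z' < take n z" by simp
    let ?T = "drop n ` {y\<in>X. take n y = z'}"
    have "countable ?T" using X(1) by simp
    moreover have "\<forall>y\<in>?T. length y = m - n" using X(2) by simp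
    ultimately obtain r where r: "length r = m - n" "\<forall>y\<in>?T. y \<le> r"
      using upper_bound_same_length_exists[OF nomax bdd] by blast
    have "y \<le> z' @ r" if y: "y \<in> X" for y
    proof (cases "take n y = z'")
      case True
      then have "drop n y \<le> r" using r(2) y by blast
      then have "take n y @ drop n y \<le> z' @ r" unfolding True by (rule append_le_append_left)
      then show ?thesis by simp
    next
      case False
      have "take n y \<le> z'" using z'(2) y by blast
      then have "take n y < z'" using False by simp
      moreover have "length (take n y) = length z'" using z'(1) X(2) y nm by simp
      ultimately have "take n y @ drop n y < z' @ r" by (rule append_less_append_same_length)
      then show ?thesis by simp
    qed
    then have "z \<le> z' @ r" using zleast r(1) z'(1) nm by simp
    moreover have "z' @ r < take n z @ drop n z"
      using lt z'(1) lz nm by (intro append_less_append_same_length) auto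
    ultimately show False by simp
  qed
  have "take n y \<le> take n z" if "y \<in> X" for y
    using X(2) that lz zub by (intro take_mono_same_length) simp_all
  then show ?thesis unfolding is_lub_len_def using least lz nm by auto
qed

lemma lmin_le: "losing i k P j \<Longrightarrow> lmin i k P \<le> j"
  unfolding lmin_def by (rule Least_le)

lemma le_lmax: "losing i k P j \<Longrightarrow> j \<le> lmax i k P"
  unfolding lmax_def by (rule Greatest_le_nat[where b = k]) (auto simp: losing_def)

lemma lpos_less_tlen: "losing i k P j \<Longrightarrow> lpos i k P j < tlen i k P"
  unfolding tlen_def lpos_def using le_lmax[of i k P j] by (simp add: div_le_mono diff_le_mono less_Suc_eq_le)

text \<open>Distinct P-losing numbers have the same parity, so they differ by at least 2.\<close>
lemma lpos_strict_mono:
  assumes "losing i k P j" "losing i k P j'" "j < j'"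
  shows "lpos i k P j < lpos i k P j'"
proof -
  have "j + 2 \<le> j'" using assms by (cases P) (auto simp: losing_def, presburger+)
  moreover have "lmin i k P \<le> j" using assms(1) by (rule lmin_le)
  ultimately have "(j - lmin i k P) div 2 + 1 \<le> (j' - lmin i k P) div 2"
    using div_le_mono[of "j - lmin i k P + 2" "j' - lmin i k P" 2] by simp
  then show ?thesis unfolding lpos_def by simp
qed

definition tuple_succ :: "nat \<Rightarrow> nat \<Rightarrow> player \<Rightarrow> nat \<Rightarrow> 'o::wellorder list \<Rightarrow> 'o list" where
  "tuple_succ i k P j \<theta> = take (lpos i k P j) \<theta> @ [osuc (\<theta> ! lpos i k P j)] @
     replicate (tlen i k P - lpos i k P j - 1) ozero"

lemma length_tuple_succ:
  "losing i k P j \<Longrightarrow> length \<theta> = tlen i k P \<Longrightarrow> length (tuple_succ i k P j \<theta>) = tlen i k P"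
  using lpos_less_tlen[of i k P j] unfolding tuple_succ_def by simp

lemma take_tuple_succ_cong:
  assumes "take n \<theta> = take n \<theta>'" "length \<theta> = length \<theta>'"
  shows "take n (tuple_succ i k P j \<theta>) = take n (tuple_succ i k P j \<theta>')"
proof (cases "n \<le> lpos i k P j")
  case True
  show ?thesis
  proof (cases "n \<le> length \<theta>")
    case False
    then have "\<theta> = \<theta>'" using assms by (metis not_le order.strict_implies_order take_all)
    then show ?thesis by simp
  qed (use assms True in \<open>simp add: tuple_succ_def min_def\<close>)
next
  case False
  then have "take (lpos i k P j) \<theta> = take (lpos i k P j) \<theta>'"
    using assms by (metis min.absorb1 nat_le_linear take_take)
  moreover have "\<theta> ! lpos i k P j = \<theta>' ! lpos i k P j"
    using assms False by (metis not_le nth_take)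
  ultimately show ?thesis unfolding tuple_succ_def by simp
qed

lemma take_tuple_succ_low:
  "n \<le> lpos i k P j \<Longrightarrow> lpos i k P j \<le> length \<theta> \<Longrightarrow> take n (tuple_succ i k P j \<theta>) = take n \<theta>"
  unfolding tuple_succ_def by (simp add: min_def)

section \<open>Branches through chains of words\<close>

lemma same_prefix_strict_prefix [simp]:
  "strict_prefix (xs @ ys) (xs @ zs) \<longleftrightarrow> strict_prefix ys zs"
  by (simp add: prefix_order.less_le)

lemma strict_prefix_append_cases:
  assumes "strict_prefix x (u @ w)"
  shows "strict_prefix x u \<or> (\<exists>v. x = u @ v \<and> strict_prefix v w)"
  using assms unfolding prefix_order.less_le prefix_append by auto

lemma strict_prefix_chain_prefix:
  assumes "\<And>n. strict_prefix (a n) (a (Suc n))" "n \<le> m"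
  shows "prefix (a n) (a m)"
  using assms(2)
proof (induction m rule: dec_induct)
  case (step m)
  then show ?case using assms(1)[of m] by (meson prefix_order.less_imp_le prefix_order.order_trans)
qed simp

lemma strict_prefix_chain_length:
  assumes "\<And>n. strict_prefix (a n) (a (Suc n))"
  shows "n \<le> length (a n)"
proof (induction n)
  case (Suc n)
  then show ?case using prefix_length_less[OF assms[of n]] by simp
qed simp

lemma prefix_bnode_mono:
  assumes "m \<le> n"
  shows "prefix (bnode \<beta> m) (bnode \<beta> n)"
proof -
  obtain d where "n = m + d" using assms le_iff_add by blast
  then have "bnode \<beta> n = bnode \<beta> m @ map \<beta> [m..<m + d]"
    unfolding bnode_def by (simp add: upt_add_eq_append[of 0 m d])
  then show ?thesis by simp
qed

lemma strict_prefix_chain_branch: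
  assumes chain: "\<And>n. strict_prefix (a n) (a (Suc n))"
  obtains \<beta> where "\<And>n. bnode \<beta> (length (a n)) = a n" "\<And>m. strict_prefix (bnode \<beta> m) (a (Suc m))"
proof
  define \<beta> where "\<beta> l = a (Suc l) ! l" for l
  have nth: "a n ! l = \<beta> l" if "l < length (a n)" for l n
  proof (cases "n \<le> Suc l")
    case True
    then show ?thesis using strict_prefix_chain_prefix[of a, OF chain True] that
      unfolding \<beta>_def prefix_def by (auto simp: nth_append)
  next
    case False
    then have "prefix (a (Suc l)) (a n)" using strict_prefix_chain_prefix[of a, OF chain] by simp
    moreover have "l < length (a (Suc l))" using strict_prefix_chain_length[of a, OF chain, of "Suc l"] by simp
    ultimately show ?thesis unfolding \<beta>_def prefix_def by (auto simp: nth_append)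
  qed
  have take: "bnode \<beta> m = take m (a n)" if "m \<le> length (a n)" for m n
    unfolding bnode_def using that nth by (intro nth_equalityI) auto
  show "bnode \<beta> (length (a n)) = a n" for n using take[of "length (a n)" n] by simp
  show "strict_prefix (bnode \<beta> m) (a (Suc m))" for m
  proof -
    have "m < length (a (Suc m))" using strict_prefix_chain_length[of a, OF chain, of "Suc m"] by simp
    then have "strict_prefix (take m (a (Suc m))) (a (Suc m))"
      by (intro prefix_order.le_neq_trans[OF take_is_prefix]) simp
    then show ?thesis using take[of m "Suc m"] \<open>m < _\<close> by simp
  qed
qed

lemma antimono_nat_stabilises:
  assumes "\<And>n. f (Suc n) \<le> (f n :: nat)"
  obtains M where "\<And>n. f M \<le> f n" "\<And>n. M \<le> n \<Longrightarrow> f n = f M"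
proof -
  obtain M where M: "\<And>n. f M \<le> f n" using ex_has_least_nat[of "\<lambda>_. True" 0 f] by blast
  moreover have "f n \<le> f M" if "M \<le> n" for n using assms that by (rule lift_Suc_antimono_le)
  ultimately show thesis using that by (meson order.antisym)
qed

section \<open>Well-foundedness of \<open>\<gg>\<close>\<close>

lemma inf_prio_eqI:
  assumes "infinite {n. t (bnode \<beta> n) = Some (Prio J)}"
    and "\<And>j'. j' < J \<Longrightarrow> finite {n. t (bnode \<beta> n) = Some (Prio j')}"
  shows "inf_prio k t \<beta> = J"
proof -
  have "(LEAST j. infinite {n. t (bnode \<beta> n) = Some (Prio j)}) = J"
    using assms by (intro Least_equality) (auto simp: not_less[symmetric])
  then show ?thesis using assms(1) unfolding inf_prio_def by auto
qed

lemma not_switched_if_no_tilde: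
  assumes "\<forall>w. strict_prefix w v \<longrightarrow> t w \<noteq> Some Tilde"
  shows "\<not> switched t v"
proof -
  have "{w. strict_prefix w v \<and> t w = Some Tilde} = {}" using assms by blast
  then show ?thesis unfolding switched_def by (metis card.empty even_zero)
qed

lemma not_won_by_if_kept_losing:
  assumes "\<And>n. \<not> switched t (bnode \<beta> n)" and "losing i k P (inf_prio k t \<beta>)"
  shows "\<not> won_by k P t \<beta>"
  using assms unfolding won_by_def won_by_1_def ev_kept_def ev_switched_def losing_def
  by (cases P) auto

lemma winning_strategy_prefix_closed:
  "winning_strategy k P t S \<Longrightarrow> u \<in> S \<Longrightarrow> prefix w u \<Longrightarrow> w \<in> S"
  unfolding winning_strategy_def strategy_def by blast

lemma inf_prio_branch_through_chain:
  assumes chain: "\<And>n. strict_prefix (a n) (a (Suc n))"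
    and node: "\<And>n. bnode \<beta> (length (a n)) = a n"
    and below: "\<And>m. strict_prefix (bnode \<beta> m) (a (Suc m))"
    and lab: "\<And>n. t (a n) = Some (Prio (jj n))"
    and least: "\<And>n. J \<le> jj n" and stable: "\<And>n. M \<le> n \<Longrightarrow> jj n = J"
    and no_lower: "\<And>n w j'. prefix (a 0) w \<Longrightarrow> strict_prefix w (a n) \<Longrightarrow> j' < jj n
                     \<Longrightarrow> t w \<noteq> Some (Prio j')"
  shows "inf_prio k t \<beta> = J"
proof (rule inf_prio_eqI)
  show "infinite {n. t (bnode \<beta> n) = Some (Prio J)}"
    unfolding infinite_nat_iff_unbounded_le
  proof
    fix N
    have "N \<le> length (a (M + N))"
      using strict_prefix_chain_length[of a, OF chain, of "M + N"] by simp
    moreover have "t (bnode \<beta> (length (a (M + N)))) = Some (Prio J)"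
      using node lab stable[of "M + N"] by simp
    ultimately show "\<exists>n\<ge>N. n \<in> {n. t (bnode \<beta> n) = Some (Prio J)}"
      by (intro exI[of _ "length (a (M + N))"]) simp
  qed
  show "finite {n. t (bnode \<beta> n) = Some (Prio j')}" if "j' < J" for j'
  proof (rule finite_subset)
    show "{n. t (bnode \<beta> n) = Some (Prio j')} \<subseteq> {..<length (a 0)}"
    proof (rule subsetI, rule ccontr)
      fix n assume n: "n \<in> {n. t (bnode \<beta> n) = Some (Prio j')}" "n \<notin> {..<length (a 0)}"
      then have "length (a 0) \<le> n" by simp
      then have "prefix (a 0) (bnode \<beta> n)" using prefix_bnode_mono[of "length (a 0)" n \<beta>] node[of 0] by simp
      moreover have "j' < jj (Suc n)" using that least[of "Suc n"] by simp
      ultimately show False using no_lower below n(1) by blast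
    qed
  qed simp
qed

text \<open>The priorities along the chain decrease, hence stabilise at a P-losing value, which is the
  least priority seen infinitely often on the (kept) branch through the chain.\<close>
lemma winning_strategy_no_losing_chain:
  assumes win: "winning_strategy k P t S"
    and chain: "\<And>n. strict_prefix (a n) (a (Suc n))" and aS: "\<And>n. a n \<in> S"
    and lab: "\<And>n. t (a n) = Some (Prio (jj n))" and los: "\<And>n. losing i k P (jj n)"
    and no_tilde: "\<And>n w. strict_prefix w (a n) \<Longrightarrow> t w \<noteq> Some Tilde"
    and no_lower: "\<And>n w j'. prefix (a 0) w \<Longrightarrow> strict_prefix w (a n) \<Longrightarrow> j' < jj n
                     \<Longrightarrow> t w \<noteq> Some (Prio j')"
  shows False
proof -
  have "jj (Suc n) \<le> jj n" for n
  proof (rule ccontr)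
    assume "\<not> jj (Suc n) \<le> jj n"
    then have "jj n < jj (Suc n)" by simp
    moreover have "prefix (a 0) (a n)" by (rule strict_prefix_chain_prefix[of a, OF chain]) simp
    ultimately have "t (a n) \<noteq> Some (Prio (jj n))" using chain by (intro no_lower)
    then show False using lab by simp
  qed
  then obtain M where M: "\<And>n. jj M \<le> jj n" "\<And>n. M \<le> n \<Longrightarrow> jj n = jj M"
    using antimono_nat_stabilises[of jj] by blast
  obtain \<beta> where node: "\<And>n. bnode \<beta> (length (a n)) = a n"
    and below: "\<And>m. strict_prefix (bnode \<beta> m) (a (Suc m))"
    using strict_prefix_chain_branch[of a, OF chain] by blast
  have branch_S: "bnode \<beta> m \<in> S" for m
    using win aS[of "Suc m"] prefix_order.less_imp_le[OF below[of m]]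
    by (rule winning_strategy_prefix_closed)
  have kept: "\<not> switched t (bnode \<beta> m)" for m
  proof (rule not_switched_if_no_tilde, intro allI impI)
    fix w assume "strict_prefix w (bnode \<beta> m)"
    then show "t w \<noteq> Some Tilde" using no_tilde prefix_order.less_trans below by blast
  qed
  have "inf_prio k t \<beta> = jj M"
    using chain node below lab M no_lower by (rule inf_prio_branch_through_chain)
  then have "\<not> won_by k P t \<beta>" using kept los by (intro not_won_by_if_kept_losing) simp_all
  then show False using win branch_S unfolding winning_strategy_def by blast
qed

lemma subtree_Nil [simp]: "subtree t [] = t"
  by (simp add: subtree_def)

lemma restr_Nil [simp]: "restr S [] = S"
  by (simp add: restr_def)

lemma active_subtree_iff:
  "active i k P (subtree t u) (restr S u) w \<longleftrightarrow> u @ w \<in> S \<and>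
     (\<exists>j. t (u @ w) = Some (Prio j) \<and> losing i k P j \<and>
          (\<forall>v. strict_prefix v w \<longrightarrow> t (u @ v) \<noteq> Some Tilde \<and> (\<forall>j'<j. t (u @ v) \<noteq> Some (Prio j'))))"
  by (simp add: active_def subtree_def restr_def)

text \<open>Between consecutive steps of a descending \<open>\<gg>\<close>-chain lies an active node, so every
  second one of these gives a strictly increasing chain of active nodes.\<close>
lemma wf_gg_subtree:
  assumes win: "winning_strategy k P t S"
    and no_tilde: "\<forall>w. strict_prefix w u \<longrightarrow> t w \<noteq> Some Tilde"
  shows "wf {(x, y). gg i k P (subtree t u) (restr S u) y x}"
proof (rule ccontr)
  let ?A = "active i k P (subtree t u) (restr S u)"
  assume "\<not> ?thesis"
  then obtain f where f: "\<And>n. gg i k P (subtree t u) (restr S u) (f n) (f (Suc n))"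
    unfolding wf_iff_no_infinite_down_chain by blast
  have "\<forall>n. \<exists>c. ?A c \<and> prefix (f n) c \<and> prefix c (f (Suc n))"
    using f unfolding gg_def by blast
  then obtain c where c: "\<And>n. ?A (c n)" "\<And>n. prefix (f n) (c n)" "\<And>n. prefix (c n) (f (Suc n))"
    by metis
  have "\<forall>n. \<exists>j. t (u @ c n) = Some (Prio j) \<and> losing i k P j \<and>
          (\<forall>v. strict_prefix v (c n) \<longrightarrow> t (u @ v) \<noteq> Some Tilde \<and> (\<forall>j'<j. t (u @ v) \<noteq> Some (Prio j')))"
    using c(1) unfolding active_subtree_iff by blast
  then obtain jj where lab: "\<And>n. t (u @ c n) = Some (Prio (jj n))" and los: "\<And>n. losing i k P (jj n)"
    and below: "\<And>n v. strict_prefix v (c n) \<Longrightarrow> t (u @ v) \<noteq> Some Tilde \<and> (\<forall>j'<jj n. t (u @ v) \<noteq> Some (Prio j'))"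
    by metis
  show False
  proof (rule winning_strategy_no_losing_chain[OF win])
    fix n
    have "strict_prefix (c (2 * n)) (f (Suc (Suc (2 * n))))"
      using c(3) f[of "Suc (2 * n)"] unfolding gg_def by (metis prefix_order.le_less_trans)
    then have "strict_prefix (c (2 * n)) (c (2 * Suc n))"
      using c(2)[of "Suc (Suc (2 * n))"] by (simp add: prefix_order.less_le_trans)
    then show "strict_prefix (u @ c (2 * n)) (u @ c (2 * Suc n))" by simp
    show "u @ c (2 * n) \<in> S" using c(1) unfolding active_subtree_iff by blast
    show "t (u @ c (2 * n)) = Some (Prio (jj (2 * n)))" by (rule lab)
    show "losing i k P (jj (2 * n))" by (rule los)
  next
    fix n w assume "strict_prefix w (u @ c (2 * n))"
    then show "t w \<noteq> Some Tilde"
      using strict_prefix_append_cases no_tilde below by blast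
  next
    fix n w j' assume w: "prefix (u @ c (2 * 0)) w" "strict_prefix w (u @ c (2 * n))" "j' < jj (2 * n)"
    obtain v where "w = u @ v" using w(1) by (auto simp: prefix_def)
    then show "t w \<noteq> Some (Prio j')" using w(2,3) below by simp
  qed
qed

section \<open>The recursion defining s\<close>

lemma succs_active:
  assumes "active i k P t S v"
  shows "succs i k P t S v = {v}"
  using assms unfolding succs_def
  by (auto simp: prefix_order.less_le prefix_order.antisym_conv)

text \<open>Below a non-active unary node every active node passes through its only child.\<close>
lemma succs_unary_inactive:
  assumes tree: "is_tree i k t" and sub: "S \<subseteq> tdom t" and lab: "t v = Some (Prio j)"
    and inactive: "\<not> active i k P t S v"
  shows "succs i k P t S v = succs i k P t S (v @ [0])"
proof -
  have "prefix v w \<longleftrightarrow> prefix (v @ [0]) w" if "active i k P t S w" for w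
  proof
    assume vw: "prefix v w"
    have "w \<noteq> v" using that inactive by blast
    then have "strict_prefix v w" using vw by simp
    then obtain d r where w: "w = v @ d # r" by (rule strict_prefixE')
    have "w \<in> tdom t" using that sub unfolding active_def by blast
    then have "v @ [d] \<in> tdom t" using tree w unfolding is_tree_def by (metis prefixI append_assoc append_Cons append_Nil)
    then have "d = 0" using tree lab unfolding is_tree_def by fastforce
    then show "prefix (v @ [0]) w" using w by simp
  qed (auto dest: append_prefixD)
  then show ?thesis unfolding succs_def by blast
qed

text \<open>What the recursion for s needs of a pair (t, \<open>\<Sigma>\<close>); it holds for the game tree and for the
  subtree at u alike.\<close>
locale sval_setting =
  fixes i k :: nat and P :: player and t :: tree and S :: "nat list set"
  assumes wf_gg: "wf {(x, y). gg i k P t S y x}"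
    and prefix_closed: "x \<in> S \<Longrightarrow> prefix y x \<Longrightarrow> y \<in> S"
    and active_child: "active i k P t S v \<Longrightarrow> v @ [0] \<in> S"
begin

lemma gg_active_child:
  assumes "active i k P t S v"
  shows "gg i k P t S v (v @ [0])"
proof -
  have "v \<in> S" using assms by (simp add: active_def)
  moreover have "strict_prefix v (v @ [0])" by (rule strict_prefixI') simp
  ultimately show ?thesis
    unfolding gg_def using assms active_child by (intro conjI exI[of _ v]) simp_all
qed

lemma gg_succs: "\<not> active i k P t S v \<Longrightarrow> w \<in> succs i k P t S v \<Longrightarrow> gg i k P t S v w"
  unfolding gg_def succs_def using prefix_closed by (auto simp: active_def prefix_order.less_le)

lemma sval_active:
  assumes "active i k P t S v" "t v = Some (Prio j)"
  shows "(sval i k P t S v :: 'o::wellorder list) = tuple_succ i k P j (sval i k P t S (v @ [0]))"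
  using assms gg_active_child[OF assms(1)] unfolding sval_def tuple_succ_def
  by (subst wfrec[OF wf_gg]) (simp add: Let_def cut_apply)

lemma sval_inactive:
  assumes "\<not> active i k P t S v"
  shows "(sval i k P t S v :: 'o::wellorder list) = tsup (tlen i k P) (sval i k P t S ` succs i k P t S v)"
proof -
  have "cut (sval i k P t S) {(x, y). gg i k P t S y x} v ` succs i k P t S v
        = (sval i k P t S ` succs i k P t S v :: 'o list set)"
    using gg_succs[OF assms] by (auto simp: cut_apply)
  then show ?thesis using assms unfolding sval_def by (subst wfrec[OF wf_gg]) simp
qed

context
  assumes nomax: "\<forall>x::'o::wellorder. \<exists>y. x < y"
    and bdd: "\<forall>X::'o set. countable X \<longrightarrow> (\<exists>b. \<forall>x\<in>X. x \<le> b)"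
begin

lemma length_sval: "length (sval i k P t S v :: 'o list) = tlen i k P"
  using wf_gg
proof (induction v rule: wf_induct_rule)
  case (less v)
  show ?case
  proof (cases "active i k P t S v")
    case True
    then obtain j where j: "t v = Some (Prio j)" "losing i k P j" unfolding active_def by blast
    have "length (sval i k P t S (v @ [0]) :: 'o list) = tlen i k P"
      using less gg_active_child[OF True] by blast
    then show ?thesis using sval_active[OF True j(1), where 'o = 'o] length_tuple_succ[OF j(2)] by simp
  next
    case False
    have "\<forall>y\<in>(sval i k P t S ` succs i k P t S v :: 'o list set). length y = tlen i k P"
      using less gg_succs[OF False] by blast
    then have "is_lub_len (tlen i k P) (sval i k P t S ` succs i k P t S v)
                 (tsup (tlen i k P) (sval i k P t S ` succs i k P t S v) :: 'o list)"
      using is_lub_len_tsup[OF nomax bdd] by simp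
    then show ?thesis using sval_inactive[OF False, where 'o = 'o] by (simp add: is_lub_len_def)
  qed
qed

lemma is_lub_len_sval:
  "is_lub_len (tlen i k P) (sval i k P t S ` succs i k P t S v) (sval i k P t S v :: 'o list)"
proof (cases "active i k P t S v")
  case True
  then show ?thesis using succs_active[OF True] by (simp add: is_lub_len_singleton length_sval)
next
  case False
  have "is_lub_len (tlen i k P) (sval i k P t S ` succs i k P t S v)
          (tsup (tlen i k P) (sval i k P t S ` succs i k P t S v) :: 'o list)"
    by (rule is_lub_len_tsup[OF nomax bdd]) (simp_all add: length_sval)
  then show ?thesis using sval_inactive[OF False, where 'o = 'o] by simp
qed

lemma sval_Prio_inactive:
  assumes "is_tree i k t" "S \<subseteq> tdom t" "t v = Some (Prio j)" "\<not> active i k P t S v"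
  shows "(sval i k P t S v :: 'o list) = sval i k P t S (v @ [0])"
  using is_lub_len_sval[of v] is_lub_len_sval[of "v @ [0]"]
  unfolding succs_unary_inactive[OF assms] by (rule is_lub_len_unique)

end

end

section \<open>Passing to the subtree at u\<close>

lemma strategy_Prio_child:
  assumes "is_tree i k t" "strategy P t S" "v \<in> S" "t v = Some (Prio j)"
  shows "v @ [0] \<in> S"
proof -
  have "v @ [0] \<in> tdom t" using assms(1,4) unfolding is_tree_def by simp
  moreover have "\<not> controlled t P v" using assms(4) by (simp add: controlled_def)
  ultimately show ?thesis using assms(2,3) unfolding strategy_def by simp
qed

lemma active_subtree_of_active:
  "active i k P t S (u @ w) \<Longrightarrow> active i k P (subtree t u) (restr S u) w"
  unfolding active_subtree_iff by (auto simp: active_def)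

lemma active_of_active_subtree:
  assumes "active i k P (subtree t u) (restr S u) w" "t (u @ w) = Some (Prio j')" "j' \<le> j"
    and "\<forall>w. strict_prefix w u \<longrightarrow> t w \<noteq> Some Tilde \<and> (\<forall>j''<j. t w \<noteq> Some (Prio j''))"
  shows "active i k P t S (u @ w)"
proof -
  have "u @ w \<in> S" and los: "losing i k P j'"
    and below: "\<forall>v. strict_prefix v w \<longrightarrow> t (u @ v) \<noteq> Some Tilde \<and> (\<forall>j''<j'. t (u @ v) \<noteq> Some (Prio j''))"
    using assms(1,2) unfolding active_subtree_iff by auto
  moreover have "t x \<noteq> Some Tilde \<and> (\<forall>j''<j'. t x \<noteq> Some (Prio j''))" if "strict_prefix x (u @ w)" for x
    using strict_prefix_append_cases[OF that] below assms(3,4) by auto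
  ultimately show ?thesis unfolding active_def using assms(2) by blast
qed

lemma sval_setting_subtree:
  assumes tree: "is_tree i k t" and win: "winning_strategy k P t S"
    and no_tilde: "\<forall>w. strict_prefix w u \<longrightarrow> t w \<noteq> Some Tilde"
  shows "sval_setting i k P (subtree t u) (restr S u)"
proof
  show "wf {(x, y). gg i k P (subtree t u) (restr S u) y x}"
    using win no_tilde by (rule wf_gg_subtree)
  show "y \<in> restr S u" if "x \<in> restr S u" "prefix y x" for x y
    using win that unfolding restr_def by (auto intro: winning_strategy_prefix_closed)
  show "v @ [0] \<in> restr S u" if act: "active i k P (subtree t u) (restr S u) v" for v
  proof -
    obtain j where "u @ v \<in> S" "t (u @ v) = Some (Prio j)"
      using act unfolding active_subtree_iff by blast
    moreover have "strategy P t S" using win by (simp add: winning_strategy_def)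
    ultimately have "(u @ v) @ [0] \<in> S" using tree by (intro strategy_Prio_child)
    then show ?thesis unfolding restr_def by simp
  qed
qed

lemma succs_append_subset_UN:
  "succs i k P t S (u @ w) \<subseteq> (\<Union>a\<in>succs i k P (subtree t u) (restr S u) w. succs i k P t S (u @ a))"
proof
  let ?A = "active i k P t S" and ?A' = "active i k P (subtree t u) (restr S u)"
  fix b assume "b \<in> succs i k P t S (u @ w)"
  then have b: "?A b" "prefix (u @ w) b" and b_min: "\<And>c. ?A c \<Longrightarrow> prefix (u @ w) c \<Longrightarrow> \<not> strict_prefix c b"
    unfolding succs_def by blast+
  obtain b' where b': "b = u @ b'" "prefix w b'" using b(2) by (auto simp: prefix_def)
  define Q where "Q = {a. ?A' a \<and> prefix w a \<and> prefix a b'}"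
  have "b' \<in> Q" unfolding Q_def using b b' active_subtree_of_active by blast
  then obtain a where a: "a \<in> Q" and a_min: "\<And>c. c \<in> Q \<Longrightarrow> length a \<le> length c"
    using ex_has_least_nat[of "\<lambda>x. x \<in> Q" b' length] by blast
  have "a \<in> succs i k P (subtree t u) (restr S u) w"
  proof -
    have "\<not> strict_prefix c a" if "?A' c" "prefix w c" for c
    proof
      assume "strict_prefix c a"
      then have "c \<in> Q" using a that unfolding Q_def by (auto dest: prefix_order.less_imp_le)
      then show False using a_min prefix_length_less[OF \<open>strict_prefix c a\<close>] by fastforce
    qed
    then show ?thesis using a unfolding Q_def succs_def by blast
  qed
  moreover have "b \<in> succs i k P t S (u @ a)"
  proof -
    have "prefix (u @ w) (u @ a)" using a unfolding Q_def by simp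
    then have "\<not> strict_prefix c b" if "?A c" "prefix (u @ a) c" for c
      using b_min that prefix_order.trans by blast
    moreover have "prefix (u @ a) b" using a b' unfolding Q_def by simp
    ultimately show ?thesis using b(1) unfolding succs_def by blast
  qed
  ultimately show "b \<in> (\<Union>a\<in>succs i k P (subtree t u) (restr S u) w. succs i k P t S (u @ a))"
    by blast
qed

lemma UN_subset_succs_append:
  "(\<Union>a\<in>succs i k P (subtree t u) (restr S u) w. succs i k P t S (u @ a)) \<subseteq> succs i k P t S (u @ w)"
proof
  let ?A = "active i k P t S" and ?A' = "active i k P (subtree t u) (restr S u)"
  fix b assume "b \<in> (\<Union>a\<in>succs i k P (subtree t u) (restr S u) w. succs i k P t S (u @ a))"
  then obtain a where "a \<in> succs i k P (subtree t u) (restr S u) w" "b \<in> succs i k P t S (u @ a)"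
    by blast
  then have a: "prefix w a" and a_min: "\<And>c. ?A' c \<Longrightarrow> prefix w c \<Longrightarrow> \<not> strict_prefix c a"
    and b: "?A b" "prefix (u @ a) b" and b_min: "\<And>c. ?A c \<Longrightarrow> prefix (u @ a) c \<Longrightarrow> \<not> strict_prefix c b"
    unfolding succs_def by blast+
  have uwb: "prefix (u @ w) b" using a b(2) by (metis prefix_order.trans same_prefix_prefix)
  have "\<not> strict_prefix c b" if c: "?A c" "prefix (u @ w) c" for c
  proof
    assume cb: "strict_prefix c b"
    obtain c' where c': "c = u @ c'" "prefix w c'" using c(2) by (auto simp: prefix_def)
    have "prefix c (u @ a) \<or> prefix (u @ a) c"
      using prefix_order.less_imp_le[OF cb] b(2) by (rule prefix_same_cases)
    then show False
    proof
      assume "prefix c (u @ a)"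
      moreover have "c \<noteq> u @ a" using b_min c(1) cb by blast
      ultimately have "strict_prefix c' a" using c'(1) by simp
      then show False using a_min c' c(1) active_subtree_of_active by blast
    qed (use b_min c cb in blast)
  qed
  then show "b \<in> succs i k P t S (u @ w)" using b(1) uwb unfolding succs_def by blast
qed

lemma succs_append_subtree:
  "succs i k P t S (u @ w) = (\<Union>a\<in>succs i k P (subtree t u) (restr S u) w. succs i k P t S (u @ a))"
  by (rule equalityI[OF succs_append_subset_UN UN_subset_succs_append])

text \<open>Both sides are least upper bounds of truncations of the same values, since the successors
  of u @ w are exactly the successors of the nodes u @ a for the successors a of w in the subtree.\<close>
lemma take_sval_append_of_succs:
  assumes nomax: "\<forall>x::'o::wellorder. \<exists>y. x < y"
    and bdd: "\<forall>X::'o set. countable X \<longrightarrow> (\<exists>b. \<forall>x\<in>X. x \<le> b)"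
    and T: "sval_setting i k P t S" and U: "sval_setting i k P (subtree t u) (restr S u)"
    and n: "n \<le> tlen i k P"
    and succs: "\<And>a. a \<in> succs i k P (subtree t u) (restr S u) w \<Longrightarrow>
      take n (sval i k P (subtree t u) (restr S u) a :: 'o list) = take n (sval i k P t S (u @ a))"
  shows "take n (sval i k P (subtree t u) (restr S u) w :: 'o list) = take n (sval i k P t S (u @ w))"
proof -
  let ?s = "sval i k P t S :: nat list \<Rightarrow> 'o list"
  let ?s' = "sval i k P (subtree t u) (restr S u) :: nat list \<Rightarrow> 'o list"
  let ?m = "tlen i k P"
  have lub_take_s: "is_lub_len n (take n ` ?s ` succs i k P t S v) (take n (?s v))" for v
    using is_lub_len_take[OF nomax bdd _ _ n sval_setting.is_lub_len_sval[OF T nomax bdd]]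
      sval_setting.length_sval[OF T nomax bdd] by simp
  have "is_lub_len n (take n ` ?s' ` succs i k P (subtree t u) (restr S u) w) (take n (?s' w))"
    using is_lub_len_take[OF nomax bdd _ _ n sval_setting.is_lub_len_sval[OF U nomax bdd]]
      sval_setting.length_sval[OF U nomax bdd] by simp
  also have "take n ` ?s' ` succs i k P (subtree t u) (restr S u) w
      = (\<lambda>a. take n (?s (u @ a))) ` succs i k P (subtree t u) (restr S u) w"
    using succs by (auto simp: image_image intro!: image_cong)
  finally have "is_lub_len n (\<Union>a\<in>succs i k P (subtree t u) (restr S u) w. take n ` ?s ` succs i k P t S (u @ a))
      (take n (?s' w))"
    by (rule is_lub_len_UN[OF lub_take_s])
  then have "is_lub_len n (take n ` ?s ` succs i k P t S (u @ w)) (take n (?s' w))"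
    unfolding succs_append_subtree[of i k P t S u w] by (simp add: image_UN)
  then show ?thesis using lub_take_s by (rule is_lub_len_unique)
qed

text \<open>An active node of the subtree that is not active in t carries a priority j' > j, so its
  update of s does not reach the entries up to index j.\<close>
lemma take_sval_append_of_active_subtree:
  assumes nomax: "\<forall>x::'o::wellorder. \<exists>y. x < y"
    and bdd: "\<forall>X::'o set. countable X \<longrightarrow> (\<exists>b. \<forall>x\<in>X. x \<le> b)"
    and T: "sval_setting i k P t S" and U: "sval_setting i k P (subtree t u) (restr S u)"
    and tree: "is_tree i k t" and sub: "S \<subseteq> tdom t" and jl: "losing i k P j"
    and pre: "\<forall>w. strict_prefix w u \<longrightarrow> t w \<noteq> Some Tilde \<and> (\<forall>j'<j. t w \<noteq> Some (Prio j'))"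
    and active': "active i k P (subtree t u) (restr S u) w"
    and child: "take (lpos i k P j + 1) (sval i k P (subtree t u) (restr S u) (w @ [0]) :: 'o list)
                = take (lpos i k P j + 1) (sval i k P t S (u @ w @ [0]))"
  shows "take (lpos i k P j + 1) (sval i k P (subtree t u) (restr S u) w :: 'o list)
         = take (lpos i k P j + 1) (sval i k P t S (u @ w))"
proof -
  let ?n = "lpos i k P j + 1"
  let ?s = "sval i k P t S :: nat list \<Rightarrow> 'o list"
  let ?s' = "sval i k P (subtree t u) (restr S u) :: nat list \<Rightarrow> 'o list"
  obtain j' where lab: "t (u @ w) = Some (Prio j')" "losing i k P j'"
    using active' unfolding active_subtree_iff by blast
  have s': "?s' w = tuple_succ i k P j' (?s' (w @ [0]))"
    using sval_setting.sval_active[OF U active'] lab by (simp add: subtree_def)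
  show ?thesis
  proof (cases "active i k P t S (u @ w)")
    case True
    have "take ?n (?s' w) = take ?n (tuple_succ i k P j' (?s (u @ w @ [0])))"
      unfolding s' using child sval_setting.length_sval[OF T nomax bdd]
        sval_setting.length_sval[OF U nomax bdd]
      by (intro take_tuple_succ_cong) simp_all
    also have "tuple_succ i k P j' (?s (u @ w @ [0])) = ?s (u @ w)"
      using sval_setting.sval_active[OF T True lab(1), where 'o = 'o] by simp
    finally show ?thesis .
  next
    case False
    then have "j < j'" using active_of_active_subtree[OF active' lab(1) _ pre] by (meson not_less)
    then have "?n \<le> lpos i k P j'" using lpos_strict_mono[OF jl lab(2)] by simp
    then have "take ?n (?s' w) = take ?n (?s' (w @ [0]))"
      unfolding s' using lpos_less_tlen[OF lab(2)] sval_setting.length_sval[OF U nomax bdd]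
      by (intro take_tuple_succ_low) (simp_all add: less_imp_le)
    also have "\<dots> = take ?n (?s (u @ w))"
      using child sval_setting.sval_Prio_inactive[OF T nomax bdd tree sub lab(1) False] by simp
    finally show ?thesis .
  qed
qed

lemma take_sval_subtree:
  assumes nomax: "\<forall>x::'o::wellorder. \<exists>y. x < y"
    and bdd: "\<forall>X::'o set. countable X \<longrightarrow> (\<exists>b. \<forall>x\<in>X. x \<le> b)"
    and tree: "is_tree i k t" and win: "winning_strategy k P t S" and jl: "losing i k P j"
    and pre: "\<forall>w. strict_prefix w u \<longrightarrow> t w \<noteq> Some Tilde \<and> (\<forall>j'<j. t w \<noteq> Some (Prio j'))"
  shows "take (lpos i k P j + 1) (sval i k P (subtree t u) (restr S u) w :: 'o list)
         = take (lpos i k P j + 1) (sval i k P t S (u @ w))"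
proof -
  have T: "sval_setting i k P t S" using sval_setting_subtree[OF tree win, of "[]"] by simp
  have U: "sval_setting i k P (subtree t u) (restr S u)"
    using pre by (intro sval_setting_subtree[OF tree win]) blast
  have sub: "S \<subseteq> tdom t" using win by (simp add: winning_strategy_def strategy_def)
  have n: "lpos i k P j + 1 \<le> tlen i k P" using lpos_less_tlen[OF jl] by simp
  show ?thesis
    using sval_setting.wf_gg[OF U]
  proof (induction w rule: wf_induct_rule)
    case (less w)
    show ?case
    proof (cases "active i k P (subtree t u) (restr S u) w")
      case True
      have "take (lpos i k P j + 1) (sval i k P (subtree t u) (restr S u) (w @ [0]) :: 'o list)
            = take (lpos i k P j + 1) (sval i k P t S (u @ w @ [0]))"
        using less sval_setting.gg_active_child[OF U True] by simp
      then show ?thesis by (rule take_sval_append_of_active_subtree[OF nomax bdd T U tree sub jl pre True])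
    next
      case False
      show ?thesis
      proof (rule take_sval_append_of_succs[OF nomax bdd T U n])
        fix a assume "a \<in> succs i k P (subtree t u) (restr S u) w"
        then show "take (lpos i k P j + 1) (sval i k P (subtree t u) (restr S u) a :: 'o list)
                   = take (lpos i k P j + 1) (sval i k P t S (u @ a))"
          using less sval_setting.gg_succs[OF U False] by blast
      qed
    qed
  qed
qed

theorem mainTheorem11:
  fixes i k j :: nat and P :: player and t :: tree and S :: "nat list set" and u :: "nat list"
  assumes ord_nomax: "\<forall>x::'o::wellorder. \<exists>y. x < y"
    and ord_ctbl_bdd: "\<forall>X::'o set. countable X \<longrightarrow> (\<exists>b. \<forall>x\<in>X. x \<le> b)"
    and ik: "i < k"
    and tree: "is_tree i k t"
    and wf: "well_formed t"
    and win: "winning_strategy k P t S"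
    and uS: "u \<in> S"
    and jl: "losing i k P j"
    and pre: "\<forall>w. strict_prefix w u \<longrightarrow> t w \<noteq> Some Tilde \<and> (\<forall>j'<j. t w \<noteq> Some (Prio j'))"
  shows "trunc i k P j (sval i k P (subtree t u) (restr S u) [] :: 'o list)
         = trunc i k P j (sval i k P t S u :: 'o list)"
  using take_sval_subtree[OF ord_nomax ord_ctbl_bdd tree win jl pre, of "[]"]
  by (simp add: trunc_def)

end
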